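(* Let $G$ be a finite group and $N$ a proper normal subgroup of $G$. Then: (1) $\eta(G/N) \le \eta(G)$. (2) $\eta(G/N) = \eta(G)$ if and only if all of the following hold: (a) $N \subseteq G^-$; (b) $(G/N)^- = \{ gN \in G/N : gN \subseteq G^-\}$ (here $gN$ is viewed as a subset of $G$); (c) for every $x \in G \setminus G^-$, every element of $xN \setminus G^-$ is conjugate in $G$ to a generator of $\langle x \rangle$. (3) If $G$ is a $p$-group and $\eta(G/N) = \eta(G)$, then $G^-$ is a union of cosets of $N$. (4) $\eta(G/N) = \eta(G)$ and $G^-$ is a union of cosets of $N$ if and only if for every $x \in G \setminus G^-$, every element of $xN$ is conjugate in $G$ to a generator of $\langle x \rangle$. (5) If $\eta(G/N) = \eta(G)$ and $G^-$ is a union of cosets of $N$, then (a) $G^- N = G^-$ and (b) $(G/N)^- = G^-N/N$.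
   Context: A cyclic subgroup $C$ of a group $G$ is maximal cyclic if there is no cyclic subgroup $D$ of $G$ with $C < D$. $\eta(G)$ denotes the number of conjugacy classes of maximal cyclic subgroups of $G$. For a group $G$, $G^- = \{ g \in G : \langle g \rangle \text{ is not maximal cyclic in } G\}$; similarly $(G/N)^-$ is the set of elements of $G/N$ generating a cyclic subgroup that is not maximal cyclic in $G/N$. For subsets $S,T \subseteq G$, $ST = \{st : s \in S, t \in T\}$, and $SN/N = \{ sN : s \in S\} \subseteq G/N$. *)

theory Defs
  imports "HOL-Algebra.Algebra"
begin

definition cyclic_subgroup :: "('a, 'b) monoid_scheme \<Rightarrow> 'a set \<Rightarrow> bool" where
  "cyclic_subgroup G C \<longleftrightarrow> (\<exists>g \<in> carrier G. C = generate G {g})"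

definition max_cyclic :: "('a, 'b) monoid_scheme \<Rightarrow> 'a set \<Rightarrow> bool" where
  "max_cyclic G C \<longleftrightarrow> cyclic_subgroup G C \<and> \<not> (\<exists>D. cyclic_subgroup G D \<and> C \<subset> D)"

definition subgroup_conj_class :: "('a, 'b) monoid_scheme \<Rightarrow> 'a set \<Rightarrow> 'a set set" where
  "subgroup_conj_class G H = {g <#\<^bsub>G\<^esub> (H #>\<^bsub>G\<^esub> inv\<^bsub>G\<^esub> g) | g. g \<in> carrier G}"

definition eta :: "('a, 'b) monoid_scheme \<Rightarrow> nat" where
  "eta G = card (subgroup_conj_class G ` {C. max_cyclic G C})"

definition minus_set :: "('a, 'b) monoid_scheme \<Rightarrow> 'a set" where
  "minus_set G = {g \<in> carrier G. \<not> max_cyclic G (generate G {g})}"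

definition conjugate_in :: "('a, 'b) monoid_scheme \<Rightarrow> 'a \<Rightarrow> 'a \<Rightarrow> bool" where
  "conjugate_in G y z \<longleftrightarrow> (\<exists>g \<in> carrier G. y = g \<otimes>\<^bsub>G\<^esub> z \<otimes>\<^bsub>G\<^esub> inv\<^bsub>G\<^esub> g)"

definition conj_to_generator :: "('a, 'b) monoid_scheme \<Rightarrow> 'a \<Rightarrow> 'a \<Rightarrow> bool" where
  "conj_to_generator G y x \<longleftrightarrow>
     (\<exists>z \<in> carrier G. generate G {z} = generate G {x} \<and> conjugate_in G y z)"

definition union_of_cosets :: "('a, 'b) monoid_scheme \<Rightarrow> 'a set \<Rightarrow> 'a set \<Rightarrow> bool" where
  "union_of_cosets G N S \<longleftrightarrow> (\<exists>\<C>. \<C> \<subseteq> rcosets\<^bsub>G\<^esub> N \<and> S = \<Union>\<C>)"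

end

(*
  Write \<pi> : G \<rightarrow> G/N for the quotient map. Every maximal cyclic subgroup of G/N is the image
  of a maximal cyclic subgroup of G, and conjugate subgroups have conjugate images. Hence
  [C] \<mapsto> [\<pi> C] maps the classes of maximal cyclic subgroups of G onto a set of classes that
  contains all classes of maximal cyclic subgroups of G/N, so \<eta>(G/N) \<le> \<eta>(G), with equality
  iff this map is injective and only hits maximal classes. The second condition says that \<pi>
  maps elements outside G\<^sup>- outside (G/N)\<^sup>-; it is equivalent to (b) and implies (a). For
  injectivity the key fact is that generators lift: if \<langle>c\<rangle> = \<langle>yN\<rangle> then c = zN for some
  generator z of \<langle>y\<rangle>, because every unit modulo ord(yN) lifts to a unit modulo ord(y). After
  conjugating, this reduces injectivity to elements of a single coset, which is (c).
  In a p-group, suppose equality holds, x \<in> G\<^sup>- and some y \<in> xN lies outside G\<^sup>-. Then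
  xN = yN lies outside (G/N)\<^sup>-. Writing x \<in> \<langle>w\<^sup>p\<rangle> with w \<notin> G\<^sup>-, maximality of \<langle>xN\<rangle> forces
  \<langle>(wN)\<^sup>p\<rangle> = \<langle>wN\<rangle>, so the p-power order of wN is prime to p, wN = N and w \<in> N \<subseteq> G\<^sup>-,
  a contradiction.
*)

theory Submission
  imports Defs
begin

section \<open>Units modulo a divisor\<close>

lemma exists_coprime_divisor_absorbing_primes:
  fixes n j :: int
  assumes "n > 0"
  obtains d where "d > 0" "d dvd n" "coprime d j"
    "\<And>p. Factorial_Ring.prime p \<Longrightarrow> p dvd n \<Longrightarrow> \<not> p dvd j \<Longrightarrow> p dvd d"
proof -
  define D where "D = {d. 0 < d \<and> d dvd n \<and> coprime d j}"
  have "finite D"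
  proof (rule finite_subset)
    show "D \<subseteq> {0..n}"
      using assms by (auto simp: D_def zdvd_imp_le)
  qed simp
  moreover have "1 \<in> D"
    using assms by (simp add: D_def)
  ultimately have d: "Max D \<in> D" and d_max: "\<And>e. e \<in> D \<Longrightarrow> e \<le> Max D"
    by (auto intro: Max_in)
  have "p dvd Max D" if p: "Factorial_Ring.prime p" "p dvd n" "\<not> p dvd j" for p
  proof (rule ccontr)
    assume "\<not> p dvd Max D"
    with p d have "p * Max D \<in> D"
      by (auto simp: D_def prime_imp_coprime divides_mult prime_gt_0_int)
    moreover have "Max D < p * Max D"
      using d prime_gt_1_int[OF p(1)] by (simp add: D_def)
    ultimately show False
      using d_max by force
  qed
  with d show thesis
    by (intro that[of "Max D"]) (auto simp: D_def)
qed

lemma coprime_lift_to_multiple: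
  fixes j m n :: int
  assumes "n > 0" "m dvd n" "coprime j m"
  obtains j' where "m dvd j' - j" "coprime j' n"
proof -
  obtain d where d: "d dvd n" "coprime d j"
    and absorbs: "\<And>p. Factorial_Ring.prime p \<Longrightarrow> p dvd n \<Longrightarrow> \<not> p dvd j \<Longrightarrow> p dvd d"
    using exists_coprime_divisor_absorbing_primes[OF assms(1)] by metis
  have "coprime (j + m * d) n"
  proof (rule ccontr)
    assume "\<not> coprime (j + m * d) n"
    then obtain p where p: "Factorial_Ring.prime p" "p dvd j + m * d" "p dvd n"
      using assms(1) prime_divisor_exists[of "gcd (j + m * d) n"]
      by (auto simp: coprime_iff_gcd_eq_1 intro: dvd_trans)
    show False
    proof (cases "p dvd j")
      case True
      then have "\<not> p dvd m" "\<not> p dvd d"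
        using p(1) assms(3) d(2) by (meson coprime_common_divisor not_prime_unit coprime_commute)+
      with p show False
        using True by (simp add: prime_dvd_mult_iff dvd_add_right_iff)
    next
      case False
      then show False
        using p absorbs by (simp add: dvd_add_left_iff)
    qed
  qed
  then show thesis
    by (intro that[of "j + m * d"]) simp_all
qed

lemma coprime_iff_exists_inverse_mod:
  fixes k m :: int
  shows "coprime k m \<longleftrightarrow> (\<exists>i. m dvd k * i - 1)"
proof
  assume "coprime k m"
  then obtain u v where "u * k + v * m = 1"
    by (metis bezout_int coprime_iff_gcd_eq_1)
  then have "k * u - 1 = m * (- v)"
    by (simp add: algebra_simps)
  then show "\<exists>i. m dvd k * i - 1"
    by (metis dvd_triv_left)
next
  assume "\<exists>i. m dvd k * i - 1"
  then obtain i where "m dvd k * i - 1" ..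
  show "coprime k m"
  proof (rule coprimeI)
    fix c assume "c dvd k" "c dvd m"
    moreover have "c dvd k * i - 1"
      using \<open>c dvd m\<close> \<open>m dvd k * i - 1\<close> by (rule dvd_trans)
    ultimately show "is_unit c"
      using dvd_diff[of c "k * i" "k * i - 1"] by simp
  qed
qed

lemma eq_one_if_coprime_dvd_prime_power:
  fixes d p :: nat
  assumes "coprime p d" "d dvd p ^ k"
  shows "d = 1"
  using assms coprime_common_divisor[of d "p ^ k" d] by (simp add: coprime_commute)

section \<open>Conjugacy classes of cyclic subgroups\<close>

definition conj_set :: "('a, 'b) monoid_scheme \<Rightarrow> 'a \<Rightarrow> 'a set \<Rightarrow> 'a set" where
  "conj_set G g A = (\<lambda>a. g \<otimes>\<^bsub>G\<^esub> a \<otimes>\<^bsub>G\<^esub> inv\<^bsub>G\<^esub> g) ` A"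

definition cyclic_conj_class :: "('a, 'b) monoid_scheme \<Rightarrow> 'a \<Rightarrow> 'a set set" where
  "cyclic_conj_class G x = subgroup_conj_class G (generate G {x})"

context group
begin

lemma inv_mult_cancel_left [simp]: "x \<in> carrier G \<Longrightarrow> y \<in> carrier G \<Longrightarrow> inv x \<otimes> (x \<otimes> y) = y"
  by (simp add: m_assoc [symmetric])

lemma mult_inv_cancel_left [simp]: "x \<in> carrier G \<Longrightarrow> y \<in> carrier G \<Longrightarrow> x \<otimes> (inv x \<otimes> y) = y"
  by (simp add: m_assoc [symmetric])

lemma subgroup_conj_class_eq_image:
  assumes "A \<subseteq> carrier G"
  shows "subgroup_conj_class G A = (\<lambda>g. conj_set G g A) ` carrier G"
proof -
  have "g <# (A #> inv g) = conj_set G g A" if "g \<in> carrier G" for g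
    using assms that unfolding conj_set_def l_coset_def r_coset_def by (auto simp: m_assoc subsetD)
  then show ?thesis
    unfolding subgroup_conj_class_def by auto
qed

lemma conj_mult:
  assumes "g \<in> carrier G" "x \<in> carrier G" "y \<in> carrier G"
  shows "g \<otimes> (x \<otimes> y) \<otimes> inv g = (g \<otimes> x \<otimes> inv g) \<otimes> (g \<otimes> y \<otimes> inv g)"
proof -
  have "(g \<otimes> x \<otimes> inv g) \<otimes> (g \<otimes> y \<otimes> inv g) = g \<otimes> x \<otimes> (inv g \<otimes> g) \<otimes> y \<otimes> inv g"
    using assms by (simp add: m_assoc)
  then show ?thesis
    using assms by (simp add: m_assoc)
qed

lemma conj_set_generate:
  assumes "g \<in> carrier G" "x \<in> carrier G"
  shows "conj_set G g (generate G {x}) = generate G {g \<otimes> x \<otimes> inv g}"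
proof -
  have "group_hom G G (\<lambda>a. g \<otimes> a \<otimes> inv g)"
    using assms(1) by unfold_locales (auto simp: hom_def conj_mult)
  from group_hom.generate_img[OF this, of "{x}"] show ?thesis
    using assms(2) by (simp add: conj_set_def)
qed

lemma conj_set_mult:
  assumes "A \<subseteq> carrier G" "g \<in> carrier G" "h \<in> carrier G"
  shows "conj_set G g (conj_set G h A) = conj_set G (g \<otimes> h) A"
  unfolding conj_set_def image_image
  using assms by (intro image_cong) (auto simp: m_assoc inv_mult_group subsetD)

lemma conj_set_one: "A \<subseteq> carrier G \<Longrightarrow> conj_set G \<one> A = A"
  unfolding conj_set_def by (simp add: subsetD cong: image_cong)

lemma conj_set_inv_cancel:
  "A \<subseteq> carrier G \<Longrightarrow> g \<in> carrier G \<Longrightarrow> conj_set G (inv g) (conj_set G g A) = A"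
  by (simp add: conj_set_mult conj_set_one)

lemma subgroup_conj_class_eq_iff:
  assumes "A \<subseteq> carrier G" "B \<subseteq> carrier G"
  shows "subgroup_conj_class G A = subgroup_conj_class G B \<longleftrightarrow> (\<exists>g\<in>carrier G. B = conj_set G g A)"
proof
  assume "subgroup_conj_class G A = subgroup_conj_class G B"
  moreover have "B \<in> subgroup_conj_class G B"
    using assms(2) conj_set_one[of B] by (auto simp: subgroup_conj_class_eq_image image_iff)
  ultimately have "B \<in> (\<lambda>g. conj_set G g A) ` carrier G"
    using assms(1) by (simp add: subgroup_conj_class_eq_image)
  then show "\<exists>g\<in>carrier G. B = conj_set G g A"
    by blast
next
  assume "\<exists>g\<in>carrier G. B = conj_set G g A"
  then obtain g where g: "g \<in> carrier G" "B = conj_set G g A" ..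
  have "conj_set G h B = conj_set G (h \<otimes> g) A" if "h \<in> carrier G" for h
    using assms g that by (simp add: conj_set_mult)
  moreover have "conj_set G h A = conj_set G (h \<otimes> inv g) B" if "h \<in> carrier G" for h
    using assms g that by (simp add: conj_set_mult m_assoc)
  ultimately have "(\<lambda>h. conj_set G h B) ` carrier G = (\<lambda>h. conj_set G h A) ` carrier G"
    using g(1) by (auto simp del: conj_set_mult)
  then show "subgroup_conj_class G A = subgroup_conj_class G B"
    using assms by (simp add: subgroup_conj_class_eq_image)
qed

lemma cyclic_subgroup_subset: "cyclic_subgroup G C \<Longrightarrow> C \<subseteq> carrier G"
  unfolding cyclic_subgroup_def using generate_incl by blast

lemma max_cyclic_eq_if_subset:
  "max_cyclic G C \<Longrightarrow> cyclic_subgroup G D \<Longrightarrow> C \<subseteq> D \<Longrightarrow> C = D"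
  unfolding max_cyclic_def by blast

lemma max_cyclic_conj_set:
  assumes C: "max_cyclic G C" and g: "g \<in> carrier G"
  shows "max_cyclic G (conj_set G g C)"
proof -
  have cyclic_conj: "cyclic_subgroup G (conj_set G h D)"
    if "cyclic_subgroup G D" "h \<in> carrier G" for D h
    using that conj_set_generate unfolding cyclic_subgroup_def by auto
  have "conj_set G g C = D" if D: "cyclic_subgroup G D" "conj_set G g C \<subseteq> D" for D
  proof -
    have C_sub: "C \<subseteq> carrier G" and D_sub: "D \<subseteq> carrier G"
      using C D(1) cyclic_subgroup_subset unfolding max_cyclic_def by auto
    have "C \<subseteq> conj_set G (inv g) D"
      using D(2) conj_set_inv_cancel[OF C_sub g] unfolding conj_set_def by blast
    then have "C = conj_set G (inv g) D"
      using C cyclic_conj[OF D(1)] g max_cyclic_eq_if_subset by blast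
    then show ?thesis
      using conj_set_inv_cancel[of D "inv g"] D_sub g by simp
  qed
  then show ?thesis
    using C g cyclic_conj unfolding max_cyclic_def by blast
qed

lemma minus_set_subset_carrier: "minus_set G \<subseteq> carrier G"
  unfolding minus_set_def by blast

lemma not_minus_set_iff:
  "x \<in> carrier G \<Longrightarrow> x \<notin> minus_set G \<longleftrightarrow> max_cyclic G (generate G {x})"
  unfolding minus_set_def by auto

lemma max_cyclic_iff_generate_not_minus:
  "max_cyclic G C \<longleftrightarrow> (\<exists>x\<in>carrier G - minus_set G. C = generate G {x})"
  unfolding minus_set_def max_cyclic_def cyclic_subgroup_def by auto

lemma generate_singleton_subset:
  "y \<in> carrier G \<Longrightarrow> x \<in> generate G {y} \<Longrightarrow> generate G {x} \<subseteq> generate G {y}"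
  by (intro generate_subgroup_incl generate_is_subgroup) auto

lemma exists_max_cyclic_containing:
  assumes "finite (carrier G)" "x \<in> carrier G"
  obtains y where "y \<in> carrier G - minus_set G" "x \<in> generate G {y}"
proof -
  let ?S = "{D. cyclic_subgroup G D \<and> generate G {x} \<subseteq> D}"
  have "?S \<subseteq> Pow (carrier G)"
    using cyclic_subgroup_subset by blast
  then have "finite ?S"
    using assms(1) by (rule finite_subset[OF _ finite_Pow_iff[THEN iffD2]])
  moreover have "generate G {x} \<in> ?S"
    using assms(2) unfolding cyclic_subgroup_def by auto
  ultimately obtain M where M: "M \<in> ?S" and M_max: "\<forall>D\<in>?S. M \<subseteq> D \<longrightarrow> M = D"
    using finite_has_maximal[of ?S] by blast
  have "max_cyclic G M"
    unfolding max_cyclic_def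
  proof (intro conjI notI)
    show "cyclic_subgroup G M"
      using M by simp
  next
    assume "\<exists>D. cyclic_subgroup G D \<and> M \<subset> D"
    then obtain D where "cyclic_subgroup G D" "M \<subset> D"
      by blast
    moreover from this have "D \<in> ?S"
      using M by auto
    ultimately show False
      using M_max by blast
  qed
  moreover have "x \<in> M"
    using M(1) generate.incl[of x "{x}" G] by blast
  ultimately show thesis
    using that unfolding max_cyclic_iff_generate_not_minus by blast
qed

lemma one_in_minus_set:
  assumes "carrier G \<noteq> {\<one>}"
  shows "\<one> \<in> minus_set G"
proof -
  obtain x where x: "x \<in> carrier G" "x \<noteq> \<one>"
    using assms one_closed by blast
  then have "generate G {\<one>} \<subset> generate G {x}"
    using generate_one generate.one generate.incl[of x "{x}" G] by auto
  moreover have "cyclic_subgroup G (generate G {x})"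
    using x unfolding cyclic_subgroup_def by auto
  ultimately show ?thesis
    unfolding minus_set_def max_cyclic_def by auto
qed

lemma generate_pow_eq_iff_coprime:
  assumes x: "x \<in> carrier G"
  shows "generate G {x [^] k} = generate G {x} \<longleftrightarrow> coprime k (int (ord x))"
proof -
  have "generate G {x [^] k} \<subseteq> generate G {x}"
    using x by (intro generate_singleton_subset) (auto simp: generate_pow)
  then have "generate G {x [^] k} = generate G {x} \<longleftrightarrow> x \<in> generate G {x [^] k}"
    using x generate_singleton_subset[of "x [^] k" x] generate.incl[of x "{x}" G] by auto
  also have "\<dots> \<longleftrightarrow> (\<exists>i. x = x [^] (k * i))"
    using x by (auto simp: generate_pow int_pow_pow)
  also have "\<dots> \<longleftrightarrow> coprime k (int (ord x))"
    using x int_pow_eq[OF x, of 1] by (simp add: coprime_iff_exists_inverse_mod)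
  finally show ?thesis .
qed

lemma cyclic_conj_class_eq_iff:
  assumes "x \<in> carrier G" "y \<in> carrier G"
  shows "cyclic_conj_class G x = cyclic_conj_class G y
     \<longleftrightarrow> (\<exists>g\<in>carrier G. generate G {y} = conj_set G g (generate G {x}))"
  unfolding cyclic_conj_class_def using assms
  by (intro subgroup_conj_class_eq_iff) (simp_all add: generate_incl)

lemma conj_to_generator_iff_cyclic_conj_class_eq:
  assumes x: "x \<in> carrier G" and y: "y \<in> carrier G"
  shows "conj_to_generator G y x \<longleftrightarrow> cyclic_conj_class G x = cyclic_conj_class G y"
proof
  assume "conj_to_generator G y x"
  then obtain z g where "z \<in> carrier G" "generate G {z} = generate G {x}" "g \<in> carrier G"
    "y = g \<otimes> z \<otimes> inv g"
    unfolding conj_to_generator_def conjugate_in_def by blast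
  then show "cyclic_conj_class G x = cyclic_conj_class G y"
    using x y by (metis cyclic_conj_class_eq_iff conj_set_generate)
next
  assume "cyclic_conj_class G x = cyclic_conj_class G y"
  then obtain g where g: "g \<in> carrier G" "generate G {y} = conj_set G g (generate G {x})"
    using cyclic_conj_class_eq_iff[OF x y] by blast
  define z where "z = inv g \<otimes> y \<otimes> g"
  have z: "z \<in> carrier G"
    using g y by (simp add: z_def)
  have "generate G {z} = conj_set G (inv g) (generate G {y})"
    using conj_set_generate[of "inv g" y] g(1) y by (simp add: z_def)
  also have "\<dots> = generate G {x}"
    using g x by (simp add: conj_set_inv_cancel generate_incl)
  finally have "generate G {z} = generate G {x}" .
  moreover have "y = g \<otimes> z \<otimes> inv g"
    using g y by (simp add: z_def m_assoc)
  ultimately show "conj_to_generator G y x"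
    unfolding conj_to_generator_def conjugate_in_def using z g by blast
qed

lemma not_minus_set_if_cyclic_conj_class_eq:
  assumes "x \<in> carrier G" "y \<in> carrier G" "cyclic_conj_class G x = cyclic_conj_class G y"
    and "x \<notin> minus_set G"
  shows "y \<notin> minus_set G"
  using assms max_cyclic_conj_set
  by (metis cyclic_conj_class_eq_iff not_minus_set_iff)

lemma exists_max_cyclic_pow_prime_containing:
  assumes finite: "finite (carrier G)"
    and p: "Factorial_Ring.prime (p::nat)" and order: "order G = p ^ k"
    and x: "x \<in> minus_set G"
  obtains w where "w \<in> carrier G - minus_set G" "x \<in> generate G {w [^] int p}"
proof -
  obtain w where w: "w \<in> carrier G - minus_set G" "x \<in> generate G {w}"
    using exists_max_cyclic_containing[OF finite] x minus_set_subset_carrier by blast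
  then obtain l where l: "x = w [^] (l::int)"
    using generate_pow by blast
  have "int p dvd l"
  proof (rule ccontr)
    assume "\<not> int p dvd l"
    moreover have "Factorial_Ring.prime (int p)"
      using p by simp
    ultimately have "coprime l (int p ^ k)"
      by (intro prime_imp_power_coprime)
    moreover have "int (ord w) dvd int p ^ k"
      using ord_dvd_group_order[of w] w order by (metis DiffD1 of_nat_dvd_iff of_nat_power)
    ultimately have "generate G {x} = generate G {w}"
      using w l coprime_divisors[OF dvd_refl] generate_pow_eq_iff_coprime by blast
    then show False
      using w x not_minus_set_iff minus_set_subset_carrier by (metis DiffE subsetD)
  qed
  then obtain m where "l = int p * m"
    by blast
  then have "x = (w [^] int p) [^] m"
    using w l by (simp add: int_pow_pow)
  then have "x \<in> generate G {w [^] int p}"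
    using w by (auto simp: generate_pow)
  with w that show thesis
    by blast
qed

lemma eq_one_if_generate_pow_eq:
  assumes u: "u \<in> carrier G" and "ord u dvd p ^ k"
    and "generate G {u [^] int p} = generate G {u}"
  shows "u = \<one>"
proof -
  have "coprime p (ord u)"
    using assms generate_pow_eq_iff_coprime by (simp add: coprime_int_iff)
  then have "ord u = 1"
    using assms(2) by (rule eq_one_if_coprime_dvd_prime_power)
  then show ?thesis
    using u ord_eq_1 by blast
qed

lemma eta_eq_card_cyclic_conj_classes:
  "eta G = card (cyclic_conj_class G ` (carrier G - minus_set G))"
proof -
  have "{C. max_cyclic G C} = (\<lambda>x. generate G {x}) ` (carrier G - minus_set G)"
    using max_cyclic_iff_generate_not_minus by auto
  then show ?thesis
    unfolding eta_def cyclic_conj_class_def by (simp add: image_image)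
qed

end

section \<open>Cyclic subgroups of a quotient group\<close>

lemma card_le_card_image_of_coarser:
  assumes "finite S" and "B \<subseteq> h ` S"
    and coarser: "\<And>x y. x \<in> S \<Longrightarrow> y \<in> S \<Longrightarrow> g x = g y \<Longrightarrow> h x = h y"
  shows "card B \<le> card (g ` S)"
    and "card B = card (g ` S) \<longleftrightarrow> h ` S \<subseteq> B \<and> (\<forall>x\<in>S. \<forall>y\<in>S. h x = h y \<longrightarrow> g x = g y)"
proof -
  define f where "f = h \<circ> inv_into S g"
  have f_g: "f (g x) = h x" if "x \<in> S" for x
  proof -
    have "inv_into S g (g x) \<in> S" "g (inv_into S g (g x)) = g x"
      using that by (auto intro: inv_into_into f_inv_into_f)
    then show ?thesis
      unfolding f_def comp_def using that by (intro coarser)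
  qed
  have f_image: "f ` g ` S = h ` S"
    unfolding image_image using f_g by (rule image_cong[OF refl])
  have le_h: "card B \<le> card (h ` S)"
    using assms(1,2) by (intro card_mono) auto
  have le_g: "card (h ` S) \<le> card (g ` S)"
    using card_image_le[of "g ` S" f] assms(1) by (simp add: f_image)
  from le_h le_g show "card B \<le> card (g ` S)"
    by simp
  have "card B = card (g ` S) \<longleftrightarrow> B = h ` S \<and> card (h ` S) = card (g ` S)"
  proof
    assume "card B = card (g ` S)"
    then have "card B = card (h ` S)"
      using le_h le_g by linarith
    then show "B = h ` S \<and> card (h ` S) = card (g ` S)"
      using card_subset_eq[of "h ` S" B] assms(1,2) \<open>card B = card (g ` S)\<close> by simp
  next
    assume "B = h ` S \<and> card (h ` S) = card (g ` S)"
    then show "card B = card (g ` S)"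
      by (elim conjE) (simp only:)
  qed
  moreover have "card (h ` S) = card (g ` S) \<longleftrightarrow> inj_on f (g ` S)"
    using assms(1) by (simp add: inj_on_iff_eq_card f_image)
  moreover have "inj_on f (g ` S) \<longleftrightarrow> (\<forall>x\<in>S. \<forall>y\<in>S. h x = h y \<longrightarrow> g x = g y)"
    by (auto simp: inj_on_def f_g)
  ultimately show "card B = card (g ` S) \<longleftrightarrow> h ` S \<subseteq> B \<and> (\<forall>x\<in>S. \<forall>y\<in>S. h x = h y \<longrightarrow> g x = g y)"
    using assms(2) by blast
qed

sublocale normal \<subseteq> quotient: group "G Mod H"
  by (rule factorgroup_is_group)

context normal
begin

lemma quotient_map_group_hom: "group_hom G (G Mod H) (\<lambda>x. H #> x)"
  by (intro group_hom.intro group_hom_axioms.intro is_group quotient.is_group r_coset_hom_Mod)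

lemma rcos_in_quotient: "x \<in> carrier G \<Longrightarrow> H #> x \<in> carrier (G Mod H)"
  by (simp add: carrier_FactGroup)

lemma rcos_eq_iff: "x \<in> carrier G \<Longrightarrow> y \<in> carrier G \<Longrightarrow> H #> x = H #> y \<longleftrightarrow> y \<in> H #> x"
  using repr_independence repr_independenceD subgroup_axioms by metis

lemma rcos_eq_one_iff: "x \<in> carrier G \<Longrightarrow> H #> x = \<one>\<^bsub>G Mod H\<^esub> \<longleftrightarrow> x \<in> H"
  by (metis coset_join2 one_FactGroup rcos_self subgroup_axioms)

lemma quotient_generate:
  "x \<in> carrier G \<Longrightarrow> (\<lambda>a. H #> a) ` generate G {x} = generate (G Mod H) {H #> x}"
  using group_hom.generate_img[OF quotient_map_group_hom, of "{x}"] by simp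

lemma quotient_conj_set:
  assumes "A \<subseteq> carrier G" "g \<in> carrier G"
  shows "(\<lambda>a. H #> a) ` conj_set G g A = conj_set (G Mod H) (H #> g) ((\<lambda>a. H #> a) ` A)"
  unfolding conj_set_def image_image
  using assms group_hom.hom_mult[OF quotient_map_group_hom] group_hom.hom_inv[OF quotient_map_group_hom]
  by (intro image_cong) (auto simp: subsetD)

lemma quotient_cyclic_conj_class_cong:
  assumes x: "x \<in> carrier G" and y: "y \<in> carrier G"
    and "cyclic_conj_class G x = cyclic_conj_class G y"
  shows "cyclic_conj_class (G Mod H) (H #> x) = cyclic_conj_class (G Mod H) (H #> y)"
proof -
  obtain g where g: "g \<in> carrier G" "generate G {y} = conj_set G g (generate G {x})"
    using assms cyclic_conj_class_eq_iff by blast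
  then have "generate (G Mod H) {H #> y} = conj_set (G Mod H) (H #> g) (generate (G Mod H) {H #> x})"
    using x y by (simp add: generate_incl quotient_conj_set flip: quotient_generate)
  then show ?thesis
    using g(1) x y by (auto simp: quotient.cyclic_conj_class_eq_iff rcos_in_quotient)
qed

lemma ord_quotient_dvd:
  assumes "x \<in> carrier G"
  shows "quotient.ord (H #> x) dvd ord x"
proof -
  have "(H #> x) [^]\<^bsub>G Mod H\<^esub> ord x = \<one>\<^bsub>G Mod H\<^esub>"
    using assms by (simp add: FactGroup_pow coset_mult_one subset)
  then show ?thesis
    using quotient.pow_eq_id[OF rcos_in_quotient[OF assms]] by simp
qed

lemma finite_quotient: "finite (carrier G) \<Longrightarrow> finite (carrier (G Mod H))"
  by (simp add: carrier_FactGroup)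

lemma l_coset_eq_r_coset: "x \<in> carrier G \<Longrightarrow> x <# H = H #> x"
  using coset_eq by simp

lemma mem_l_coset_iff:
  assumes "x \<in> carrier G"
  shows "y \<in> x <# H \<longleftrightarrow> y \<in> carrier G \<and> H #> x = H #> y"
proof -
  have "y \<in> x <# H \<longleftrightarrow> y \<in> H #> x"
    using assms by (simp add: l_coset_eq_r_coset)
  also have "\<dots> \<longleftrightarrow> y \<in> carrier G \<and> H #> x = H #> y"
    using assms rcos_eq_iff elemrcos_carrier[OF is_group] by blast
  finally show ?thesis .
qed

lemma conj_to_generator_on_cosets_iff:
  "(\<forall>x\<in>carrier G - minus_set G. \<forall>y\<in>(x <# H) - minus_set G. conj_to_generator G y x)
     \<longleftrightarrow> (\<forall>x\<in>carrier G - minus_set G. \<forall>y\<in>carrier G - minus_set G.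
            H #> x = H #> y \<longrightarrow> cyclic_conj_class G x = cyclic_conj_class G y)"
proof (intro iffI ballI impI)
  fix x y
  assume "\<forall>x\<in>carrier G - minus_set G. \<forall>y\<in>(x <# H) - minus_set G. conj_to_generator G y x"
    and x: "x \<in> carrier G - minus_set G" and y: "y \<in> carrier G - minus_set G" and "H #> x = H #> y"
  then have "conj_to_generator G y x"
    using mem_l_coset_iff by blast
  then show "cyclic_conj_class G x = cyclic_conj_class G y"
    using x y conj_to_generator_iff_cyclic_conj_class_eq by blast
next
  fix x y
  assume classes: "\<forall>x\<in>carrier G - minus_set G. \<forall>y\<in>carrier G - minus_set G.
      H #> x = H #> y \<longrightarrow> cyclic_conj_class G x = cyclic_conj_class G y"
    and x: "x \<in> carrier G - minus_set G" and y: "y \<in> (x <# H) - minus_set G"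
  then have "y \<in> carrier G" "H #> x = H #> y"
    using mem_l_coset_iff by blast+
  then show "conj_to_generator G y x"
    using classes x y conj_to_generator_iff_cyclic_conj_class_eq by blast
qed

lemma union_of_cosets_iff:
  "union_of_cosets G H S \<longleftrightarrow> S \<subseteq> carrier G \<and> (\<forall>x\<in>S. H #> x \<subseteq> S)"
proof
  assume "union_of_cosets G H S"
  then obtain C where C: "C \<subseteq> rcosets H" "S = \<Union>C"
    unfolding union_of_cosets_def by blast
  have "c \<subseteq> carrier G" if "c \<in> C" for c
    using that C(1) rcosets_carrier[OF is_group] by blast
  then have "S \<subseteq> carrier G"
    unfolding C(2) by (rule Union_least)
  moreover have "H #> x \<subseteq> S" if x: "x \<in> S" for x
  proof -
    obtain c where c: "c \<in> C" "x \<in> c"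
      using C(2) x by blast
    then obtain a where "a \<in> carrier G" "c = H #> a"
      using C(1) unfolding RCOSETS_def by blast
    with c have a: "a \<in> carrier G" "H #> a \<in> C" "x \<in> H #> a"
      by simp_all
    then have "H #> x = H #> a"
      using repr_independence[OF a(3) a(1) subgroup_axioms] by simp
    then show ?thesis
      using C(2) a(2) by blast
  qed
  ultimately show "S \<subseteq> carrier G \<and> (\<forall>x\<in>S. H #> x \<subseteq> S)"
    by blast
next
  assume S: "S \<subseteq> carrier G \<and> (\<forall>x\<in>S. H #> x \<subseteq> S)"
  have "x \<in> H #> x" if "x \<in> S" for x
    using that S rcos_self[OF _ subgroup_axioms] by blast
  with S have "S = \<Union>((\<lambda>x. H #> x) ` S)"
    by blast
  moreover have "(\<lambda>x. H #> x) ` S \<subseteq> rcosets H"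
    using S subset rcosetsI by blast
  ultimately show "union_of_cosets G H S"
    unfolding union_of_cosets_def by blast
qed

lemma union_of_cosetsI:
  assumes "S \<subseteq> carrier G"
    and "\<And>x y. x \<in> S \<Longrightarrow> y \<in> carrier G \<Longrightarrow> H #> x = H #> y \<Longrightarrow> y \<in> S"
  shows "union_of_cosets G H S"
  unfolding union_of_cosets_iff
  using assms rcos_eq_iff elemrcos_carrier[OF is_group] by blast

lemma union_of_cosetsD:
  assumes "union_of_cosets G H S" "x \<in> S" "y \<in> carrier G" "H #> x = H #> y"
  shows "y \<in> S"
proof -
  have "H #> x \<subseteq> S"
    using assms(1,2) by (simp add: union_of_cosets_iff)
  then show ?thesis
    using rcos_self[OF assms(3) subgroup_axioms] assms(4) by blast
qed

lemma union_of_cosets_minus_set_if_conj_to_generator: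
  assumes classes: "\<forall>x \<in> carrier G - minus_set G. \<forall>y \<in> x <# H. conj_to_generator G y x"
  shows "union_of_cosets G H (minus_set G)"
proof (rule union_of_cosetsI[OF minus_set_subset_carrier])
  fix x y assume x: "x \<in> minus_set G" and y: "y \<in> carrier G" and "H #> x = H #> y"
  then have x_carrier: "x \<in> carrier G" and "x \<in> y <# H"
    using minus_set_subset_carrier mem_l_coset_iff by auto
  show "y \<in> minus_set G"
  proof (rule ccontr)
    assume "y \<notin> minus_set G"
    then have "cyclic_conj_class G y = cyclic_conj_class G x"
      using classes y \<open>x \<in> y <# H\<close> conj_to_generator_iff_cyclic_conj_class_eq[OF y x_carrier]
      by blast
    then show False
      using not_minus_set_if_cyclic_conj_class_eq[OF y x_carrier] \<open>y \<notin> minus_set G\<close> x by blast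
  qed
qed

lemma set_mult_eq_if_union_of_cosets:
  assumes "union_of_cosets G H S"
  shows "S <#> H = S"
proof -
  have S: "S \<subseteq> carrier G" "\<And>x. x \<in> S \<Longrightarrow> H #> x \<subseteq> S"
    using assms by (simp_all add: union_of_cosets_iff)
  have "x \<in> x <# H" "x <# H \<subseteq> S" if "x \<in> S" for x
    using that S rcos_self[OF _ subgroup_axioms] l_coset_eq_r_coset by (metis subsetD)+
  then have "(\<Union>x\<in>S. x <# H) = S"
    by blast
  then show ?thesis
    by (simp add: set_mult_def l_coset_def)
qed

lemma cosets_in_eq_image_if_union_of_cosets:
  assumes "union_of_cosets G H S"
  shows "{c \<in> carrier (G Mod H). c \<subseteq> S} = (\<lambda>s. s <# H) ` S"
proof -
  have S: "S \<subseteq> carrier G" "\<And>x. x \<in> S \<Longrightarrow> H #> x \<subseteq> S"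
    using assms by (auto simp: union_of_cosets_iff)
  have "{c \<in> carrier (G Mod H). c \<subseteq> S} = (\<lambda>s. H #> s) ` S"
    using S rcos_self[OF _ subgroup_axioms] unfolding carrier_FactGroup by blast
  also have "\<dots> = (\<lambda>s. s <# H) ` S"
    using S(1) by (intro image_cong) (auto simp: l_coset_eq_r_coset)
  finally show ?thesis .
qed

context
  assumes finite: "finite (carrier G)"
begin

lemma quotient_generator_lift:
  assumes y: "y \<in> carrier G" and c: "c \<in> carrier (G Mod H)"
    and gen: "generate (G Mod H) {c} = generate (G Mod H) {H #> y}"
  obtains z where "z \<in> carrier G" "generate G {z} = generate G {y}" "H #> z = c"
proof -
  have Hy: "H #> y \<in> carrier (G Mod H)"
    using y by (rule rcos_in_quotient)
  obtain j where j: "c = (H #> y) [^]\<^bsub>G Mod H\<^esub> (j::int)"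
    using gen generate.incl[of c "{c}" "G Mod H"] quotient.generate_pow[OF Hy] by auto
  then have "coprime j (int (quotient.ord (H #> y)))"
    using gen Hy quotient.generate_pow_eq_iff_coprime by simp
  moreover have "int (quotient.ord (H #> y)) dvd int (ord y)"
    using ord_quotient_dvd[OF y] by simp
  moreover have "int (ord y) > 0"
    using ord_ge_1[OF finite y] by simp
  ultimately obtain j' where j': "int (quotient.ord (H #> y)) dvd j' - j" "coprime j' (int (ord y))"
    using coprime_lift_to_multiple by blast
  have "(H #> y) [^]\<^bsub>G Mod H\<^esub> j' = (H #> y) [^]\<^bsub>G Mod H\<^esub> j"
    using quotient.int_pow_eq[OF Hy, of j j'] j'(1) by simp
  then have "H #> (y [^] j') = c"
    using j y by (simp add: FactGroup_int_pow)
  moreover have "generate G {y [^] j'} = generate G {y}"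
    using j'(2) y by (simp add: generate_pow_eq_iff_coprime)
  ultimately show thesis
    using that y by blast
qed

lemma max_cyclic_quotient_lift:
  assumes D: "max_cyclic (G Mod H) D"
  obtains x where "x \<in> carrier G - minus_set G" "D = generate (G Mod H) {H #> x}"
proof -
  obtain c where c: "c \<in> carrier (G Mod H)" "D = generate (G Mod H) {c}"
    using D unfolding max_cyclic_def cyclic_subgroup_def by blast
  then obtain g where g: "g \<in> carrier G" "c = H #> g"
    unfolding carrier_FactGroup by blast
  obtain x where x: "x \<in> carrier G - minus_set G" "g \<in> generate G {x}"
    using exists_max_cyclic_containing[OF finite g(1)] by blast
  have "D \<subseteq> generate (G Mod H) {H #> x}"
    using c g x generate_singleton_subset[of x g] by (auto simp flip: quotient_generate)
  moreover have "cyclic_subgroup (G Mod H) (generate (G Mod H) {H #> x})"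
    using x unfolding cyclic_subgroup_def by (auto intro: rcos_in_quotient)
  ultimately have "D = generate (G Mod H) {H #> x}"
    using D quotient.max_cyclic_eq_if_subset by blast
  with x that show thesis
    by blast
qed

lemma not_minus_coset_has_not_minus_elem:
  assumes c: "c \<in> carrier (G Mod H) - minus_set (G Mod H)"
  shows "\<exists>z\<in>c. z \<notin> minus_set G"
proof -
  obtain x where x: "x \<in> carrier G - minus_set G" "generate (G Mod H) {c} = generate (G Mod H) {H #> x}"
    using c quotient.not_minus_set_iff max_cyclic_quotient_lift by (metis DiffE)
  then obtain z where z: "z \<in> carrier G" "generate G {z} = generate G {x}" "H #> z = c"
    using c quotient_generator_lift by blast
  then have "z \<notin> minus_set G"
    using x not_minus_set_iff by (metis DiffE)
  moreover have "z \<in> c"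
    using z rcos_self subgroup_axioms by blast
  ultimately show ?thesis
    by blast
qed

lemma quotient_cyclic_conj_classes_lift:
  "cyclic_conj_class (G Mod H) ` (carrier (G Mod H) - minus_set (G Mod H))
     \<subseteq> (\<lambda>x. cyclic_conj_class (G Mod H) (H #> x)) ` (carrier G - minus_set G)"
proof
  fix K assume "K \<in> cyclic_conj_class (G Mod H) ` (carrier (G Mod H) - minus_set (G Mod H))"
  then obtain c where c: "c \<in> carrier (G Mod H) - minus_set (G Mod H)" "K = cyclic_conj_class (G Mod H) c"
    by blast
  then obtain x where "x \<in> carrier G - minus_set G" "generate (G Mod H) {c} = generate (G Mod H) {H #> x}"
    using quotient.not_minus_set_iff max_cyclic_quotient_lift by (metis DiffE)
  with c show "K \<in> (\<lambda>x. cyclic_conj_class (G Mod H) (H #> x)) ` (carrier G - minus_set G)"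
    by (auto simp: cyclic_conj_class_def)
qed

lemmas eta_quotient_card_comparison =
  card_le_card_image_of_coarser[OF finite_Diff[OF finite] quotient_cyclic_conj_classes_lift
    quotient_cyclic_conj_class_cong[OF DiffD1 DiffD1]]

lemma eta_quotient_le: "eta (G Mod H) \<le> eta G"
  unfolding eta_eq_card_cyclic_conj_classes quotient.eta_eq_card_cyclic_conj_classes
  by (rule eta_quotient_card_comparison(1))

lemma quotient_cyclic_conj_classes_subset_iff:
  "(\<lambda>x. cyclic_conj_class (G Mod H) (H #> x)) ` (carrier G - minus_set G)
      \<subseteq> cyclic_conj_class (G Mod H) ` (carrier (G Mod H) - minus_set (G Mod H))
    \<longleftrightarrow> (\<forall>x\<in>carrier G - minus_set G. H #> x \<notin> minus_set (G Mod H))"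
proof
  assume sub: "(\<lambda>x. cyclic_conj_class (G Mod H) (H #> x)) ` (carrier G - minus_set G)
      \<subseteq> cyclic_conj_class (G Mod H) ` (carrier (G Mod H) - minus_set (G Mod H))"
  show "\<forall>x\<in>carrier G - minus_set G. H #> x \<notin> minus_set (G Mod H)"
  proof
    fix x assume x: "x \<in> carrier G - minus_set G"
    then obtain c where "c \<in> carrier (G Mod H) - minus_set (G Mod H)"
      "cyclic_conj_class (G Mod H) c = cyclic_conj_class (G Mod H) (H #> x)"
      using sub by (metis (no_types, lifting) image_iff image_subset_iff)
    then show "H #> x \<notin> minus_set (G Mod H)"
      using x rcos_in_quotient quotient.not_minus_set_if_cyclic_conj_class_eq by blast
  qed
next
  assume "\<forall>x\<in>carrier G - minus_set G. H #> x \<notin> minus_set (G Mod H)"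
  then have "H #> x \<in> carrier (G Mod H) - minus_set (G Mod H)" if "x \<in> carrier G - minus_set G" for x
    using that rcos_in_quotient by blast
  then show "(\<lambda>x. cyclic_conj_class (G Mod H) (H #> x)) ` (carrier G - minus_set G)
      \<subseteq> cyclic_conj_class (G Mod H) ` (carrier (G Mod H) - minus_set (G Mod H))"
    by (intro image_subsetI imageI)
qed

lemma eta_quotient_eq_iff:
  "eta (G Mod H) = eta G \<longleftrightarrow>
     (\<forall>x\<in>carrier G - minus_set G. H #> x \<notin> minus_set (G Mod H))
     \<and> (\<forall>x\<in>carrier G - minus_set G. \<forall>y\<in>carrier G - minus_set G.
          cyclic_conj_class (G Mod H) (H #> x) = cyclic_conj_class (G Mod H) (H #> y)
          \<longrightarrow> cyclic_conj_class G x = cyclic_conj_class G y)"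
  unfolding eta_eq_card_cyclic_conj_classes quotient.eta_eq_card_cyclic_conj_classes
    quotient_cyclic_conj_classes_subset_iff [symmetric]
  by (rule eta_quotient_card_comparison(2))

lemma quotient_minus_set_eq_iff:
  "minus_set (G Mod H) = {c \<in> carrier (G Mod H). c \<subseteq> minus_set G}
     \<longleftrightarrow> (\<forall>x\<in>carrier G - minus_set G. H #> x \<notin> minus_set (G Mod H))"
proof
  assume eq: "minus_set (G Mod H) = {c \<in> carrier (G Mod H). c \<subseteq> minus_set G}"
  show "\<forall>x\<in>carrier G - minus_set G. H #> x \<notin> minus_set (G Mod H)"
    using rcos_self[OF _ subgroup_axioms] by (auto simp: eq)
next
  assume preserves: "\<forall>x\<in>carrier G - minus_set G. H #> x \<notin> minus_set (G Mod H)"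
  show "minus_set (G Mod H) = {c \<in> carrier (G Mod H). c \<subseteq> minus_set G}"
  proof (intro equalityI subsetI)
    fix c assume c: "c \<in> minus_set (G Mod H)"
    then have c_carrier: "c \<in> carrier (G Mod H)"
      unfolding minus_set_def by blast
    then obtain g where g: "g \<in> carrier G" "c = H #> g"
      unfolding carrier_FactGroup by blast
    have "y \<in> minus_set G" if "y \<in> c" for y
    proof -
      have "y \<in> carrier G" "H #> y = c"
        using that g elemrcos_carrier[OF is_group] repr_independence[OF _ _ subgroup_axioms] by auto
      then show "y \<in> minus_set G"
        using preserves c by blast
    qed
    with c_carrier show "c \<in> {c \<in> carrier (G Mod H). c \<subseteq> minus_set G}"
      by blast
  next
    fix c assume "c \<in> {c \<in> carrier (G Mod H). c \<subseteq> minus_set G}"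
    then show "c \<in> minus_set (G Mod H)"
      using not_minus_coset_has_not_minus_elem by blast
  qed
qed

lemma subset_minus_set_if_quotient_preserves_not_minus:
  assumes proper: "H \<noteq> carrier G"
    and preserves: "\<forall>x\<in>carrier G - minus_set G. H #> x \<notin> minus_set (G Mod H)"
  shows "H \<subseteq> minus_set G"
proof
  fix n assume n: "n \<in> H"
  have "carrier (G Mod H) \<noteq> {\<one>\<^bsub>G Mod H\<^esub>}"
    using fact_group_trivial_iff[OF finite] proper by blast
  then have "H \<in> minus_set (G Mod H)"
    using quotient.one_in_minus_set by simp
  moreover have "H #> n = H"
    using n by (simp add: rcos_const is_group)
  ultimately have "H #> n \<in> minus_set (G Mod H)"
    by simp
  then show "n \<in> minus_set G"
    using n preserves subset by blast
qed

lemma quotient_cyclic_conj_class_eq_lift: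
  assumes x: "x \<in> carrier G" and y: "y \<in> carrier G"
    and eq: "cyclic_conj_class (G Mod H) (H #> x) = cyclic_conj_class (G Mod H) (H #> y)"
  obtains x' z where "x' \<in> carrier G" "z \<in> carrier G" "cyclic_conj_class G x' = cyclic_conj_class G x"
    "generate G {z} = generate G {y}" "x' \<in> H #> z"
proof -
  obtain c where "c \<in> carrier (G Mod H)"
    "generate (G Mod H) {H #> y} = conj_set (G Mod H) c (generate (G Mod H) {H #> x})"
    using eq x y rcos_in_quotient quotient.cyclic_conj_class_eq_iff by blast
  then obtain g where g: "g \<in> carrier G"
    and gen_y: "generate (G Mod H) {H #> y} = conj_set (G Mod H) (H #> g) (generate (G Mod H) {H #> x})"
    unfolding carrier_FactGroup by blast
  define x' where "x' = g \<otimes> x \<otimes> inv g"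
  have x': "x' \<in> carrier G"
    using g x by (simp add: x'_def)
  have gen_x': "generate G {x'} = conj_set G g (generate G {x})"
    using g x by (simp add: conj_set_generate x'_def)
  then have "cyclic_conj_class G x' = cyclic_conj_class G x"
    using g x x' cyclic_conj_class_eq_iff by metis
  moreover have "generate (G Mod H) {H #> x'} = generate (G Mod H) {H #> y}"
    using gen_y gen_x' g x x' by (simp add: generate_incl quotient_conj_set flip: quotient_generate)
  then obtain z where "z \<in> carrier G" "generate G {z} = generate G {y}" "H #> z = H #> x'"
    using quotient_generator_lift[OF y rcos_in_quotient[OF x']] by metis
  moreover have "x' \<in> H #> x'"
    using x' rcos_self subgroup_axioms by blast
  ultimately show thesis
    using that x' by simp
qed

lemma quotient_class_injective_iff_on_cosets:
  "(\<forall>x\<in>carrier G - minus_set G. \<forall>y\<in>carrier G - minus_set G.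
      cyclic_conj_class (G Mod H) (H #> x) = cyclic_conj_class (G Mod H) (H #> y)
      \<longrightarrow> cyclic_conj_class G x = cyclic_conj_class G y)
   \<longleftrightarrow> (\<forall>x\<in>carrier G - minus_set G. \<forall>y\<in>carrier G - minus_set G.
      H #> x = H #> y \<longrightarrow> cyclic_conj_class G x = cyclic_conj_class G y)"
proof (intro iffI ballI impI)
  fix x y
  assume classes: "\<forall>x\<in>carrier G - minus_set G. \<forall>y\<in>carrier G - minus_set G.
      cyclic_conj_class (G Mod H) (H #> x) = cyclic_conj_class (G Mod H) (H #> y)
      \<longrightarrow> cyclic_conj_class G x = cyclic_conj_class G y"
    and x: "x \<in> carrier G - minus_set G" and y: "y \<in> carrier G - minus_set G"
    and "H #> x = H #> y"
  then have "cyclic_conj_class (G Mod H) (H #> x) = cyclic_conj_class (G Mod H) (H #> y)"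
    by (simp only:)
  with classes x y show "cyclic_conj_class G x = cyclic_conj_class G y"
    by blast
next
  fix x y
  assume on_cosets: "\<forall>x\<in>carrier G - minus_set G. \<forall>y\<in>carrier G - minus_set G.
      H #> x = H #> y \<longrightarrow> cyclic_conj_class G x = cyclic_conj_class G y"
    and x: "x \<in> carrier G - minus_set G" and y: "y \<in> carrier G - minus_set G"
    and eq: "cyclic_conj_class (G Mod H) (H #> x) = cyclic_conj_class (G Mod H) (H #> y)"
  obtain x' z where x': "x' \<in> carrier G"
    and z: "z \<in> carrier G" and x'_class: "cyclic_conj_class G x' = cyclic_conj_class G x"
    and z_gen: "generate G {z} = generate G {y}" and "x' \<in> H #> z"
    using x y by (blast intro: quotient_cyclic_conj_class_eq_lift[OF _ _ eq])
  then have "H #> z = H #> x'"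
    using repr_independence[OF _ _ subgroup_axioms] by blast
  moreover have "x' \<notin> minus_set G"
    using x x' x'_class not_minus_set_if_cyclic_conj_class_eq[of x x'] by simp
  moreover have "z \<notin> minus_set G"
    using y z z_gen not_minus_set_iff by (metis DiffE)
  ultimately have "cyclic_conj_class G z = cyclic_conj_class G x'"
    using on_cosets x' z by blast
  moreover have "cyclic_conj_class G z = cyclic_conj_class G y"
    using z_gen by (simp add: cyclic_conj_class_def)
  ultimately show "cyclic_conj_class G x = cyclic_conj_class G y"
    using x'_class by simp
qed

lemma eta_quotient_eq_iff_conditions:
  assumes proper: "H \<noteq> carrier G"
  shows "eta (G Mod H) = eta G \<longleftrightarrow>
    (H \<subseteq> minus_set G
     \<and> minus_set (G Mod H) = {gN \<in> carrier (G Mod H). gN \<subseteq> minus_set G}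
     \<and> (\<forall>x \<in> carrier G - minus_set G. \<forall>y \<in> (x <# H) - minus_set G. conj_to_generator G y x))"
  unfolding eta_quotient_eq_iff quotient_class_injective_iff_on_cosets
    conj_to_generator_on_cosets_iff quotient_minus_set_eq_iff
  using subset_minus_set_if_quotient_preserves_not_minus[OF proper] by argo

lemma quotient_preserves_not_minus_if_union_of_cosets:
  assumes uc: "union_of_cosets G H (minus_set G)" and x: "x \<in> carrier G - minus_set G"
  shows "H #> x \<notin> minus_set (G Mod H)"
proof
  assume "H #> x \<in> minus_set (G Mod H)"
  obtain c where c: "c \<in> carrier (G Mod H) - minus_set (G Mod H)" "H #> x \<in> generate (G Mod H) {c}"
    using x quotient.exists_max_cyclic_containing[OF finite_quotient[OF finite] rcos_in_quotient] by blast
  obtain w where w: "w \<in> carrier G - minus_set G" "generate (G Mod H) {c} = generate (G Mod H) {H #> w}"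
    using c quotient.not_minus_set_iff max_cyclic_quotient_lift by (metis DiffE)
  then obtain w' where w': "w' \<in> generate G {w}" "H #> x = H #> w'"
    using c(2) quotient_generate by (metis DiffD1 imageE)
  have w'_carrier: "w' \<in> carrier G"
    using w w' generate_incl by blast
  have "w' \<notin> minus_set G"
    using uc union_of_cosetsD[of "minus_set G" w' x] w'(2) x by blast
  then have "generate G {w'} = generate G {w}"
    using w w' w'_carrier max_cyclic_eq_if_subset not_minus_set_iff generate_singleton_subset
    unfolding cyclic_subgroup_def by (metis DiffD1)
  then have "generate (G Mod H) {H #> x} = generate (G Mod H) {c}"
    using w w' w'_carrier by (metis DiffD1 quotient_generate)
  then show False
    using c \<open>H #> x \<in> minus_set (G Mod H)\<close> x quotient.not_minus_set_iff rcos_in_quotient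
    by (metis DiffD1 DiffD2)
qed

lemma not_minus_set_if_quotient_not_minus_p_group:
  assumes p: "Factorial_Ring.prime (p::nat)" and order: "order G = p ^ k"
    and H_minus: "H \<subseteq> minus_set G"
    and x: "x \<in> carrier G" and Hx: "H #> x \<notin> minus_set (G Mod H)"
  shows "x \<notin> minus_set G"
proof
  assume "x \<in> minus_set G"
  then obtain w where w: "w \<in> carrier G - minus_set G" "x \<in> generate G {w [^] int p}"
    using exists_max_cyclic_pow_prime_containing[OF finite p order] by blast
  define u where "u = H #> w"
  have u: "u \<in> carrier (G Mod H)"
    using w by (simp add: u_def rcos_in_quotient)
  have "generate (G Mod H) {u [^]\<^bsub>G Mod H\<^esub> int p} = (\<lambda>a. H #> a) ` generate G {w [^] int p}"
    using w by (simp add: u_def FactGroup_int_pow quotient_generate)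
  then have "generate (G Mod H) {H #> x} \<subseteq> generate (G Mod H) {u [^]\<^bsub>G Mod H\<^esub> int p}"
    using u w(2) by (intro quotient.generate_singleton_subset) auto
  moreover have "generate (G Mod H) {u [^]\<^bsub>G Mod H\<^esub> int p} \<subseteq> generate (G Mod H) {u}"
    using u by (intro quotient.generate_singleton_subset) (auto simp: quotient.generate_pow)
  moreover have "max_cyclic (G Mod H) (generate (G Mod H) {H #> x})"
    using Hx x quotient.not_minus_set_iff rcos_in_quotient by blast
  moreover have "cyclic_subgroup (G Mod H) (generate (G Mod H) {u})"
    using u unfolding cyclic_subgroup_def by blast
  ultimately have "generate (G Mod H) {u [^]\<^bsub>G Mod H\<^esub> int p} = generate (G Mod H) {u}"
    using quotient.max_cyclic_eq_if_subset by blast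
  moreover have "quotient.ord u dvd p ^ k"
    using ord_quotient_dvd ord_dvd_group_order w order by (metis DiffD1 dvd_trans u_def)
  ultimately have "u = \<one>\<^bsub>G Mod H\<^esub>"
    using u quotient.eq_one_if_generate_pow_eq by blast
  then have "w \<in> H"
    using w rcos_eq_one_iff by (simp add: u_def)
  then show False
    using w H_minus by blast
qed

lemma union_of_cosets_minus_set_if_p_group:
  assumes proper: "H \<noteq> carrier G"
    and p: "Factorial_Ring.prime (p::nat)" and order: "order G = p ^ k"
    and eq: "eta (G Mod H) = eta G"
  shows "union_of_cosets G H (minus_set G)"
proof (rule union_of_cosetsI[OF minus_set_subset_carrier])
  have H_minus: "H \<subseteq> minus_set G"
    and preserves: "\<forall>x\<in>carrier G - minus_set G. H #> x \<notin> minus_set (G Mod H)"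
    using eq eta_quotient_eq_iff_conditions[OF proper] quotient_minus_set_eq_iff by blast+
  fix x y assume "x \<in> minus_set G" "y \<in> carrier G" "H #> x = H #> y"
  then show "y \<in> minus_set G"
    using preserves minus_set_subset_carrier
      not_minus_set_if_quotient_not_minus_p_group[OF p order H_minus] by (metis DiffI subsetD)
qed

lemma eta_quotient_eq_and_union_of_cosets_iff:
  assumes proper: "H \<noteq> carrier G"
  shows "eta (G Mod H) = eta G \<and> union_of_cosets G H (minus_set G)
    \<longleftrightarrow> (\<forall>x \<in> carrier G - minus_set G. \<forall>y \<in> x <# H. conj_to_generator G y x)"
proof
  assume "eta (G Mod H) = eta G \<and> union_of_cosets G H (minus_set G)"
  then have classes: "\<forall>x \<in> carrier G - minus_set G. \<forall>y \<in> (x <# H) - minus_set G. conj_to_generator G y x"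
    and uc: "union_of_cosets G H (minus_set G)"
    using eta_quotient_eq_iff_conditions[OF proper] by blast+
  show "\<forall>x \<in> carrier G - minus_set G. \<forall>y \<in> x <# H. conj_to_generator G y x"
  proof (intro ballI)
    fix x y assume x: "x \<in> carrier G - minus_set G" and y: "y \<in> x <# H"
    then have "y \<in> carrier G" "H #> y = H #> x"
      using mem_l_coset_iff by auto
    then have "y \<notin> minus_set G"
      using x uc union_of_cosetsD by blast
    then show "conj_to_generator G y x"
      using classes x y by blast
  qed
next
  assume classes: "\<forall>x \<in> carrier G - minus_set G. \<forall>y \<in> x <# H. conj_to_generator G y x"
  then have uc: "union_of_cosets G H (minus_set G)"
    by (rule union_of_cosets_minus_set_if_conj_to_generator)
  then have "\<forall>x\<in>carrier G - minus_set G. H #> x \<notin> minus_set (G Mod H)"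
    using quotient_preserves_not_minus_if_union_of_cosets by blast
  then have "eta (G Mod H) = eta G"
    using classes eta_quotient_eq_iff_conditions[OF proper] quotient_minus_set_eq_iff
      subset_minus_set_if_quotient_preserves_not_minus[OF proper] by blast
  with uc show "eta (G Mod H) = eta G \<and> union_of_cosets G H (minus_set G)"
    by blast
qed

lemma quotient_minus_set_eq_image:
  assumes proper: "H \<noteq> carrier G"
    and eq: "eta (G Mod H) = eta G" and uc: "union_of_cosets G H (minus_set G)"
  shows "minus_set (G Mod H) = (\<lambda>s. s <# H) ` minus_set G"
proof -
  have "minus_set (G Mod H) = {c \<in> carrier (G Mod H). c \<subseteq> minus_set G}"
    using eq eta_quotient_eq_iff_conditions[OF proper] by blast
  then show ?thesis
    using cosets_in_eq_image_if_union_of_cosets[OF uc] by simp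
qed

end

end

theorem theorem4p1:
  fixes G (structure) and N :: "'a set"
  assumes "group G" and "finite (carrier G)"
    and "N \<lhd> G" and "N \<noteq> carrier G"
  shows
    "eta (G Mod N) \<le> eta G
     \<and> (eta (G Mod N) = eta G \<longleftrightarrow>
          (N \<subseteq> minus_set G
           \<and> minus_set (G Mod N) = {gN \<in> carrier (G Mod N). gN \<subseteq> minus_set G}
           \<and> (\<forall>x \<in> carrier G - minus_set G. \<forall>y \<in> (x <# N) - minus_set G.
                 conj_to_generator G y x)))
     \<and> ((\<exists>p k. Factorial_Ring.prime (p::nat) \<and> order G = p ^ k) \<and> eta (G Mod N) = eta G
          \<longrightarrow> union_of_cosets G N (minus_set G))
     \<and> ((eta (G Mod N) = eta G \<and> union_of_cosets G N (minus_set G)) \<longleftrightarrow>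
          (\<forall>x \<in> carrier G - minus_set G. \<forall>y \<in> x <# N. conj_to_generator G y x))
     \<and> (eta (G Mod N) = eta G \<and> union_of_cosets G N (minus_set G) \<longrightarrow>
          minus_set G <#> N = minus_set G
          \<and> minus_set (G Mod N) = (\<lambda>s. s <# N) ` (minus_set G <#> N))"
proof -
  interpret normal N G
    by (rule assms(3))
  note finite = assms(2) and proper = assms(4)
  have "(\<exists>p k. Factorial_Ring.prime (p::nat) \<and> order G = p ^ k) \<and> eta (G Mod N) = eta G
      \<longrightarrow> union_of_cosets G N (minus_set G)"
    using union_of_cosets_minus_set_if_p_group[OF finite proper] by blast
  moreover have "eta (G Mod N) = eta G \<and> union_of_cosets G N (minus_set G) \<longrightarrow>
      minus_set G <#> N = minus_set G \<and> minus_set (G Mod N) = (\<lambda>s. s <# N) ` (minus_set G <#> N)"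
    using set_mult_eq_if_union_of_cosets quotient_minus_set_eq_image[OF finite proper]
    by simp
  ultimately show ?thesis
    using eta_quotient_le[OF finite] eta_quotient_eq_iff_conditions[OF finite proper]
      eta_quotient_eq_and_union_of_cosets_iff[OF finite proper]
    by (intro conjI)
qed

end
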